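(* Let $H$ be a real Hilbert space, $r_0>0$ and $\mathcal{V}:(0,r_0]\rightrightarrows H$ a set-valued mapping with nonempty values. Assume that for each $r\in(0,r_0]$ there exist $\epsilon_r\in(0,r)$ and an absolutely continuous curve $\theta_r:(r-\epsilon_r,r]\to H$ such that $\theta_r(s)\in\mathcal{V}(s)$ for all $s\in(r-\epsilon_r,r]$. Then there exist a countable partition $\{I_n\}_{n\in\mathbb{N}}$ of $(0,r_0]$ into intervals with nonempty interior and a map $\theta:(0,r_0]\to H$ with $\theta(r)\in\mathcal{V}(r)$ for all $r\in(0,r_0]$ such that $\theta$ is absolutely continuous on each $I_n$. *)

theory Defs
  imports "HOL-Analysis.Analysis"
begin

definition abs_continuous_on :: "real set \<Rightarrow> (real \<Rightarrow> 'a::real_normed_vector) \<Rightarrow> bool" where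
  "abs_continuous_on I f \<longleftrightarrow>
    (\<forall>e>0. \<exists>d>0. \<forall>(n::nat) (a::nat \<Rightarrow> real) (b::nat \<Rightarrow> real).
       (\<forall>k<n. a k \<le> b k \<and> {a k..b k} \<subseteq> I) \<and>
       (\<forall>j<n. \<forall>k<n. j \<noteq> k \<longrightarrow> b j \<le> a k \<or> b k \<le> a j) \<and>
       (\<Sum>k<n. b k - a k) < d
       \<longrightarrow> (\<Sum>k<n. norm (f (b k) - f (a k))) < e)"

end

theory Submission
  imports Defs
begin

text \<open>Call an interval good if it stays away from 0 and carries an absolutely continuous
  selection of V. By hypothesis every r in (0, r0] is the right endpoint of a good interval,
  and it suffices to partition (0, r0] countably into half-open intervals each lying in a
  good one. Consider the t for which (t, r0] admits such a partition. Their infimum is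
  attained (glue partitions of the blocks between the terms of a decreasing sequence
  converging to it) and cannot be positive (add a good interval ending at it). The
  resulting partition of (0, r0] is infinite because good intervals stay away from 0, so
  it can be enumerated by the natural numbers; gluing selections on its pieces gives the
  theorem.\<close>

lemma abs_continuous_on_subset_cong:
  assumes "abs_continuous_on I f" "J \<subseteq> I" "\<And>x. x \<in> J \<Longrightarrow> g x = f x"
  shows "abs_continuous_on J g"
  unfolding abs_continuous_on_def
proof (intro allI impI)
  fix e :: real assume "e > 0"
  then obtain d where "d > 0" and d: "\<forall>(n::nat) (a::nat \<Rightarrow> real) b.
      (\<forall>k<n. a k \<le> b k \<and> {a k..b k} \<subseteq> I) \<and>
      (\<forall>j<n. \<forall>k<n. j \<noteq> k \<longrightarrow> b j \<le> a k \<or> b k \<le> a j) \<and>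
      (\<Sum>k<n. b k - a k) < d \<longrightarrow> (\<Sum>k<n. norm (f (b k) - f (a k))) < e"
    using assms(1) unfolding abs_continuous_on_def by blast
  show "\<exists>d>0. \<forall>(n::nat) (a::nat \<Rightarrow> real) b.
      (\<forall>k<n. a k \<le> b k \<and> {a k..b k} \<subseteq> J) \<and>
      (\<forall>j<n. \<forall>k<n. j \<noteq> k \<longrightarrow> b j \<le> a k \<or> b k \<le> a j) \<and>
      (\<Sum>k<n. b k - a k) < d \<longrightarrow> (\<Sum>k<n. norm (g (b k) - g (a k))) < e"
  proof (intro exI[of _ d] conjI allI impI \<open>d > 0\<close>)
    fix n :: nat and a b :: "nat \<Rightarrow> real"
    assume H: "(\<forall>k<n. a k \<le> b k \<and> {a k..b k} \<subseteq> J) \<and>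
      (\<forall>j<n. \<forall>k<n. j \<noteq> k \<longrightarrow> b j \<le> a k \<or> b k \<le> a j) \<and>
      (\<Sum>k<n. b k - a k) < d"
    have "(\<Sum>k<n. norm (g (b k) - g (a k))) = (\<Sum>k<n. norm (f (b k) - f (a k)))"
      using H assms(3) by (intro sum.cong) (auto simp: subset_iff)
    also have "\<dots> < e"
    proof -
      have "\<forall>k<n. a k \<le> b k \<and> {a k..b k} \<subseteq> I"
        using H assms(2) by blast
      then show ?thesis
        using d H by blast
    qed
    finally show "(\<Sum>k<n. norm (g (b k) - g (a k))) < e" .
  qed
qed

lemma disjoint_family_glue:
  assumes "disjoint_family I"
  obtains g where "\<And>n x. x \<in> I n \<Longrightarrow> g x = h n x"
proof
  fix n x assume "x \<in> I n"
  with assms have "(THE m. x \<in> I m) = n"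
    unfolding disjoint_family_on_def by (intro the_equality) auto
  then show "h (THE m. x \<in> I m) x = h n x"
    by simp
qed

definition has_ac_selection :: "(real \<Rightarrow> 'a::real_normed_vector set) \<Rightarrow> real set \<Rightarrow> bool" where
  "has_ac_selection V U \<longleftrightarrow> (\<exists>\<theta>. abs_continuous_on U \<theta> \<and> (\<forall>s\<in>U. \<theta> s \<in> V s))"

lemma has_ac_selection_subset:
  assumes "has_ac_selection V U" "J \<subseteq> U"
  shows "has_ac_selection V J"
proof -
  obtain \<theta> where "abs_continuous_on U \<theta>" "\<forall>s\<in>U. \<theta> s \<in> V s"
    using assms(1) unfolding has_ac_selection_def by blast
  moreover from this(1) have "abs_continuous_on J \<theta>"
    by (rule abs_continuous_on_subset_cong[OF _ assms(2) refl])
  ultimately show ?thesis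
    unfolding has_ac_selection_def using assms(2) by blast
qed

lemma has_ac_selection_glue:
  assumes "disjoint_family I" "\<And>n. has_ac_selection V (I n)"
  obtains \<theta> where "\<And>n. abs_continuous_on (I n) \<theta>" "\<And>s. s \<in> (\<Union>n. I n) \<Longrightarrow> \<theta> s \<in> V s"
proof -
  obtain \<sigma> where \<sigma>: "\<And>n. abs_continuous_on (I n) (\<sigma> n)" "\<And>n s. s \<in> I n \<Longrightarrow> \<sigma> n s \<in> V s"
    using assms(2) unfolding has_ac_selection_def by metis
  obtain \<theta> where \<theta>: "\<And>n x. x \<in> I n \<Longrightarrow> \<theta> x = \<sigma> n x"
    using disjoint_family_glue[OF assms(1)] by blast
  show ?thesis
  proof (rule that)
    show "abs_continuous_on (I n) \<theta>" for n
      by (rule abs_continuous_on_subset_cong[OF \<sigma>(1)[of n] order_refl \<theta>[where n = n]])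
    show "\<theta> s \<in> V s" if "s \<in> (\<Union>n. I n)" for s
      using that \<theta> \<sigma>(2) by force
  qed
qed

definition ioc_partition :: "real set set \<Rightarrow> real set \<Rightarrow> real set set \<Rightarrow> bool" where
  "ioc_partition C A P \<longleftrightarrow> partition_on A P \<and> countable P \<and>
     (\<forall>I\<in>P. (\<exists>a b. I = {a<..b}) \<and> (\<exists>U\<in>C. I \<subseteq> U))"

lemma ioc_partitionE:
  assumes "ioc_partition C A P" "I \<in> P"
  obtains a b U where "I = {a<..b}" "a < b" "U \<in> C" "I \<subseteq> U"
proof -
  have PA: "partition_on A P" and "\<exists>a b. I = {a<..b}" "\<exists>U\<in>C. I \<subseteq> U"
    using assms unfolding ioc_partition_def by auto
  then obtain a b U where "I = {a<..b}" "U \<in> C" "I \<subseteq> U"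
    by blast
  moreover have "I \<noteq> {}"
    using partition_onD3[OF PA] assms(2) by auto
  ultimately show ?thesis
    using that by auto
qed

lemma ioc_partition_empty: "ioc_partition C {} {}"
  by (simp add: ioc_partition_def partition_on_empty)

lemma ioc_partition_restrict:
  assumes P: "ioc_partition C A P"
  shows "ioc_partition C ({c<..d} \<inter> A) ((\<inter>) {c<..d} ` P - {{}})"
proof -
  have "partition_on ({c<..d} \<inter> A) ((\<inter>) {c<..d} ` P - {{}})"
    using P partition_on_restrict unfolding ioc_partition_def by blast
  moreover have "countable ((\<inter>) {c<..d} ` P - {{}})"
    using P unfolding ioc_partition_def by simp
  moreover have "(\<exists>a b. J = {a<..b}) \<and> (\<exists>U\<in>C. J \<subseteq> U)" if J: "J \<in> (\<inter>) {c<..d} ` P" for J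
  proof -
    obtain I where I: "I \<in> P" and J_eq: "J = {c<..d} \<inter> I"
      using J by blast
    obtain a b U where "I = {a<..b}" "U \<in> C" "I \<subseteq> U"
      using P I by (rule ioc_partitionE)
    moreover from this J_eq have "J = {max c a<..min d b}" "J \<subseteq> U"
      by auto
    ultimately show ?thesis
      by blast
  qed
  ultimately show ?thesis
    unfolding ioc_partition_def by blast
qed

lemma ioc_partition_insert:
  assumes P: "ioc_partition C A P" and disj: "disjnt {a<..b} A"
    and "a < b" "U \<in> C" "{a<..b} \<subseteq> U"
  shows "ioc_partition C ({a<..b} \<union> A) (insert {a<..b} P)"
proof -
  have PA: "partition_on A P"
    using P unfolding ioc_partition_def by blast
  have "disjnt {a<..b} (\<Union>P)"
    using disj partition_onD1[OF PA] by simp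
  moreover have "{a<..b} \<union> A - {a<..b} = A"
    using disj by (auto simp: disjnt_def)
  ultimately have "partition_on ({a<..b} \<union> A) (insert {a<..b} P)"
    using partition_on_insert[of "{a<..b}" P "{a<..b} \<union> A"] PA \<open>a < b\<close> by simp
  moreover have "countable (insert {a<..b} P)"
    using P by (simp add: ioc_partition_def)
  moreover have "\<forall>I\<in>insert {a<..b} P. (\<exists>a b. I = {a<..b}) \<and> (\<exists>U\<in>C. I \<subseteq> U)"
    using P assms(4,5) by (auto simp: ioc_partition_def)
  ultimately show ?thesis
    by (simp add: ioc_partition_def)
qed

lemma ioc_partition_UN:
  fixes A :: "'i::countable \<Rightarrow> real set"
  assumes "disjoint_family A" "\<And>n. ioc_partition C (A n) (P n)"
  shows "ioc_partition C (\<Union>n. A n) (\<Union>n. P n)"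
proof -
  have PA: "partition_on (A n) (P n)" for n
    using assms(2) unfolding ioc_partition_def by blast
  then have PU: "\<Union>(P n) = A n" for n
    by (simp add: partition_on_def)
  have "disjoint (\<Union>n. P n)"
    using partition_onD2[OF PA] assms(1) by (intro disjoint_UN) (simp_all add: PU)
  moreover have "\<Union>(\<Union>n. P n) = (\<Union>n. A n)"
    by (auto simp flip: PU)
  moreover have "{} \<notin> (\<Union>n. P n)"
    using partition_onD3[OF PA] by simp
  ultimately have "partition_on (\<Union>n. A n) (\<Union>n. P n)"
    by (simp add: partition_on_def)
  moreover have "countable (\<Union>n. P n)"
    using assms(2) by (intro countable_UN) (simp_all add: ioc_partition_def)
  moreover have "\<forall>I\<in>(\<Union>n. P n). (\<exists>a b. I = {a<..b}) \<and> (\<exists>U\<in>C. I \<subseteq> U)"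
    using assms(2) by (simp add: ioc_partition_def)
  ultimately show ?thesis
    by (simp add: ioc_partition_def)
qed

lemma disjoint_family_ioc_decseq:
  fixes g :: "nat \<Rightarrow> real"
  assumes "decseq g"
  shows "disjoint_family (\<lambda>n. {g (Suc n)<..g n})"
proof -
  have "{g (Suc m)<..g m} \<inter> {g (Suc n)<..g n} = {}" if "m < n" for m n
    using assms that by (auto simp: decseq_def dest: Suc_leI)
  then show ?thesis
    unfolding disjoint_family_on_def by (metis Int_commute linorder_neqE_nat)
qed

lemma UN_ioc_decseq:
  fixes g :: "nat \<Rightarrow> real"
  assumes "decseq g" "g \<longlonglongrightarrow> s"
  shows "(\<Union>n. {g (Suc n)<..g n}) = {s<..g 0}"
proof (intro equalityI subsetI)
  fix x assume "x \<in> (\<Union>n. {g (Suc n)<..g n})"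
  then obtain n where "g (Suc n) < x" "x \<le> g n"
    by auto
  moreover have "s \<le> g (Suc n)" "g n \<le> g 0"
    using decseq_ge[OF assms] decseqD[OF assms(1)] by auto
  ultimately show "x \<in> {s<..g 0}"
    by auto
next
  fix x assume x: "x \<in> {s<..g 0}"
  then have "eventually (\<lambda>n. g n < x) sequentially"
    using order_tendstoD(2)[OF assms(2)] by simp
  then obtain K where "\<And>n. K \<le> n \<Longrightarrow> g n < x"
    unfolding eventually_sequentially by blast
  then have "g K < x"
    by simp
  define N where "N = (LEAST n. g n < x)"
  have "g N < x"
    unfolding N_def using LeastI[of "\<lambda>n. g n < x", OF \<open>g K < x\<close>] .
  have "N \<noteq> 0"
    using x \<open>g N < x\<close> by (intro notI) simp
  then obtain m where m: "N = Suc m"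
    using not0_implies_Suc by blast
  then have "m < N"
    by simp
  then have "\<not> g m < x"
    unfolding N_def by (rule not_less_Least)
  with \<open>g N < x\<close> m show "x \<in> (\<Union>n. {g (Suc n)<..g n})"
    by auto
qed

lemma ioc_partition_decseq_limit:
  fixes g :: "nat \<Rightarrow> real"
  assumes "decseq g" "g \<longlonglongrightarrow> s" "\<And>n. \<exists>P. ioc_partition C {g (Suc n)<..g n} P"
  obtains P where "ioc_partition C {s<..g 0} P"
proof -
  obtain P where "\<And>n. ioc_partition C {g (Suc n)<..g n} (P n)"
    using assms(3) by metis
  then have "ioc_partition C (\<Union>n. {g (Suc n)<..g n}) (\<Union>n. P n)"
    by (rule ioc_partition_UN[OF disjoint_family_ioc_decseq[OF assms(1)]])
  then show ?thesis
    using that by (simp only: UN_ioc_decseq[OF assms(1,2)])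
qed

lemma ioc_partition_shrink:
  assumes "ioc_partition C {t<..u} P" "t \<le> c" "d \<le> u"
  shows "\<exists>Q. ioc_partition C {c<..d} Q"
proof -
  have "{c<..d} \<inter> {t<..u} = {c<..d}"
    using assms(2,3) by auto
  with ioc_partition_restrict[OF assms(1), of c d] show ?thesis
    by auto
qed

lemma ioc_partition_left_limit:
  fixes s u :: real
  assumes "s < u" and right: "\<And>t. s < t \<Longrightarrow> t \<le> u \<Longrightarrow> \<exists>P. ioc_partition C {t<..u} P"
  obtains P where "ioc_partition C {s<..u} P"
proof -
  define g where "g n = s + (u - s) / real (Suc n)" for n
  have "decseq g"
    unfolding g_def using \<open>s < u\<close> by (intro decseq_SucI) (simp add: frac_le)
  have "g \<longlonglongrightarrow> s + 0"
    unfolding g_def by (intro tendsto_add tendsto_const LIMSEQ_Suc lim_const_over_n)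
  then have "g \<longlonglongrightarrow> s"
    by simp
  moreover have "\<exists>Q. ioc_partition C {g (Suc n)<..g n} Q" for n
  proof -
    have "s < g (Suc n)"
      unfolding g_def using \<open>s < u\<close> by simp
    moreover have "g m \<le> u" for m
      unfolding g_def using \<open>s < u\<close> by (auto simp: field_simps intro!: add_mono mult_right_mono)
    ultimately obtain P where "ioc_partition C {g (Suc n)<..u} P"
      using right by blast
    then show ?thesis
      by (rule ioc_partition_shrink) (use \<open>g n \<le> u\<close> in auto)
  qed
  ultimately obtain P where "ioc_partition C {s<..g 0} P"
    using ioc_partition_decseq_limit[OF \<open>decseq g\<close>] by blast
  with that show ?thesis
    by (simp add: g_def)
qed

lemma ioc_partition_Inf_attained:
  fixes a u :: real and C :: "real set set"
  defines "T \<equiv> {t \<in> {a..u}. \<exists>P. ioc_partition C {t<..u} P}"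
  assumes "a \<le> u"
  shows "Inf T \<in> T"
proof -
  define s where "s = Inf T"
  have uT: "u \<in> T"
    unfolding T_def using assms
    by (intro CollectI conjI exI[of _ "{}"]) (simp_all add: ioc_partition_empty)
  have bdd: "bdd_below T"
    unfolding T_def by (auto intro: bdd_belowI)
  have "T \<noteq> {}"
    using uT by blast
  then have "a \<le> s"
    unfolding s_def by (rule cInf_greatest) (simp add: T_def)
  have "s \<le> u"
    unfolding s_def using uT bdd by (rule cInf_lower)
  have "s \<in> T"
  proof (cases "s = u")
    case False
    with \<open>s \<le> u\<close> have "s < u"
      by simp
    have right: "\<exists>P. ioc_partition C {t<..u} P" if t: "s < t" "t \<le> u" for t
    proof -
      have "\<exists>t'\<in>T. t' < t"
        using cInf_less_iff[of T] bdd uT t(1) unfolding s_def by blast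
      then obtain t' where "t' \<in> T" "t' < t"
        by blast
      then obtain P where "ioc_partition C {t'<..u} P"
        unfolding T_def by auto
      then show ?thesis
        by (rule ioc_partition_shrink) (use t \<open>t' < t\<close> in auto)
    qed
    obtain P where "ioc_partition C {s<..u} P"
      using ioc_partition_left_limit[OF \<open>s < u\<close> right] by blast
    then show ?thesis
      unfolding T_def using \<open>a \<le> s\<close> \<open>s \<le> u\<close> by auto
  qed (use uT in simp)
  then show ?thesis
    unfolding s_def .
qed

lemma ioc_partition_exists:
  fixes a u :: real
  assumes "a \<le> u"
    and local_cover: "\<And>r. r \<in> {a<..u} \<Longrightarrow> \<exists>\<delta>>0. \<exists>U\<in>C. {r - \<delta><..r} \<subseteq> U"
  obtains P where "ioc_partition C {a<..u} P"
proof -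
  define T where "T = {t \<in> {a..u}. \<exists>P. ioc_partition C {t<..u} P}"
  define s where "s = Inf T"
  have "s \<in> T"
    unfolding s_def T_def using assms(1) by (rule ioc_partition_Inf_attained)
  then obtain P where P: "ioc_partition C {s<..u} P" and "a \<le> s" "s \<le> u"
    unfolding T_def by auto
  have "s = a"
  proof (rule ccontr)
    assume "s \<noteq> a"
    with \<open>a \<le> s\<close> \<open>s \<le> u\<close> have "s \<in> {a<..u}"
      by simp
    then obtain \<delta> U where \<delta>: "\<delta> > 0" "U \<in> C" "{s - \<delta><..s} \<subseteq> U"
      using local_cover by blast
    define s' where "s' = s - min \<delta> (s - a)"
    have "s' < s" "a \<le> s'"
      using \<delta> \<open>s \<noteq> a\<close> \<open>a \<le> s\<close> unfolding s'_def by auto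
    have "{s'<..s} \<subseteq> {s - \<delta><..s}"
      unfolding s'_def by auto
    then have "{s'<..s} \<subseteq> U"
      using \<delta>(3) by (rule order_trans)
    then have "ioc_partition C ({s'<..s} \<union> {s<..u}) (insert {s'<..s} P)"
      using \<open>s' < s\<close> \<open>U \<in> C\<close> by (intro ioc_partition_insert[OF P]) (auto simp: disjnt_def)
    moreover have "{s'<..s} \<union> {s<..u} = {s'<..u}"
      using \<open>s' < s\<close> \<open>s \<le> u\<close> by auto
    ultimately have "s' \<in> T"
      unfolding T_def using \<open>a \<le> s'\<close> \<open>s' < s\<close> \<open>s \<le> u\<close> by auto
    moreover have "bdd_below T"
      unfolding T_def by (auto intro: bdd_belowI)
    ultimately have "s \<le> s'"
      unfolding s_def by (rule cInf_lower)
    with \<open>s' < s\<close> show False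
      by simp
  qed
  with P that show ?thesis
    by blast
qed

lemma ioc_partition_infinite:
  fixes t u :: real
  assumes P: "ioc_partition C {t<..u} P" and "t < u"
    and away: "\<And>U. U \<in> C \<Longrightarrow> \<exists>a>t. U \<subseteq> {a<..}"
  shows "infinite P"
proof
  \<comment> \<open>Finitely many pieces would all lie to the right of the least of their lower bounds.\<close>
  assume "finite P"
  have "\<exists>a>t. I \<subseteq> {a<..}" if I: "I \<in> P" for I
  proof -
    obtain U where "U \<in> C" "I \<subseteq> U"
      using P I by (rule ioc_partitionE)
    with away show ?thesis by blast
  qed
  then obtain b where b: "\<And>I. I \<in> P \<Longrightarrow> b I > t \<and> I \<subseteq> {b I<..}" by metis
  define m where "m = Min (insert u (b ` P))"
  have "\<forall>I\<in>P. t < b I"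
    using b by blast
  then have "t < m" "m \<le> u"
    unfolding m_def using \<open>finite P\<close> \<open>t < u\<close> by simp_all
  moreover have "partition_on {t<..u} P"
    using P by (simp add: ioc_partition_def)
  note partition_onD1[OF this]
  ultimately have "(t + m) / 2 \<in> \<Union>P"
    by auto
  then obtain I where I: "I \<in> P" "(t + m) / 2 \<in> I"
    by blast
  moreover have "m \<le> b I"
    unfolding m_def using \<open>finite P\<close> I by simp
  ultimately show False
    using \<open>t < m\<close> b[OF I(1)] by auto
qed

lemma ioc_partition_enumeration:
  assumes P: "ioc_partition C A P" and "infinite P"
  obtains I :: "nat \<Rightarrow> real set"
  where "disjoint_family I" "(\<Union>n. I n) = A"
    "\<And>n. is_interval (I n)" "\<And>n. interior (I n) \<noteq> {}" "\<And>n. \<exists>U\<in>C. I n \<subseteq> U"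
proof -
  have partition: "partition_on A P" and "countable P"
    using P by (simp_all add: ioc_partition_def)
  obtain I :: "nat \<Rightarrow> real set" where I: "bij_betw I UNIV P"
    using countable_infiniteE'[OF \<open>countable P\<close> \<open>infinite P\<close>] by blast
  have IP: "I n \<in> P" for n
    using I bij_betwE by blast
  show ?thesis
  proof (rule that)
    show "disjoint_family I"
      using I partition_onD2[OF partition] disjoint_image_disjoint_family_on[of I UNIV]
      by (simp add: bij_betw_def)
    show "(\<Union>n. I n) = A"
      using I partition_onD1[OF partition] by (simp add: bij_betw_def)
  next
    fix n
    obtain a b U where "I n = {a<..b}" "a < b" "U \<in> C" "I n \<subseteq> U"
      using P IP by (rule ioc_partitionE)
    then show "is_interval (I n)" "interior (I n) \<noteq> {}" "\<exists>U\<in>C. I n \<subseteq> U"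
      by (auto simp: is_interval_oc)
  qed
qed

theorem proposition5p7:
  fixes V :: "real \<Rightarrow> 'a::{real_inner, complete_space} set"
    and r0 :: real
  assumes r0_pos: "r0 > 0"
    and nonempty: "\<And>r. r \<in> {0<..r0} \<Longrightarrow> V r \<noteq> {}"
    and local_sel: "\<And>r. r \<in> {0<..r0} \<Longrightarrow>
        \<exists>\<epsilon> \<theta>. 0 < \<epsilon> \<and> \<epsilon> < r \<and> abs_continuous_on {r - \<epsilon><..r} \<theta> \<and>
              (\<forall>s\<in>{r - \<epsilon><..r}. \<theta> s \<in> V s)"
  shows "\<exists>(I :: nat \<Rightarrow> real set) (\<theta> :: real \<Rightarrow> 'a).
           disjoint_family I \<and> (\<Union>n. I n) = {0<..r0} \<and>
           (\<forall>n. is_interval (I n) \<and> interior (I n) \<noteq> {}) \<and>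
           (\<forall>r\<in>{0<..r0}. \<theta> r \<in> V r) \<and>
           (\<forall>n. abs_continuous_on (I n) \<theta>)"
proof -
  define C where "C = {U. (\<exists>a>0. U \<subseteq> {a<..}) \<and> has_ac_selection V U}"
  have cover: "\<exists>\<delta>>0. \<exists>U\<in>C. {r - \<delta><..r} \<subseteq> U" if r: "r \<in> {0<..r0}" for r
  proof -
    obtain \<epsilon> where "0 < \<epsilon>" "\<epsilon> < r" "has_ac_selection V {r - \<epsilon><..r}"
      using local_sel[OF r] unfolding has_ac_selection_def by blast
    then have "{r - \<epsilon><..r} \<in> C"
      unfolding C_def by (intro CollectI conjI exI[of _ "r - \<epsilon>"]) auto
    with \<open>0 < \<epsilon>\<close> show ?thesis
      by blast
  qed
  obtain P where P: "ioc_partition C {0<..r0} P"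
    using ioc_partition_exists[OF less_imp_le[OF r0_pos] cover] by blast
  moreover have "infinite P"
    using P r0_pos by (rule ioc_partition_infinite) (auto simp: C_def)
  ultimately obtain I :: "nat \<Rightarrow> real set" where I: "disjoint_family I" "(\<Union>n. I n) = {0<..r0}"
    "\<And>n. is_interval (I n)" "\<And>n. interior (I n) \<noteq> {}" "\<And>n. \<exists>U\<in>C. I n \<subseteq> U"
    by (rule ioc_partition_enumeration) blast
  have "has_ac_selection V (I n)" for n
    using I(5)[of n] unfolding C_def by (blast intro: has_ac_selection_subset)
  then obtain \<theta> :: "real \<Rightarrow> 'a" where
    "\<And>n. abs_continuous_on (I n) \<theta>" "\<And>s. s \<in> {0<..r0} \<Longrightarrow> \<theta> s \<in> V s"
    using has_ac_selection_glue[OF I(1)] unfolding I(2) by blast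
  with I(1-4) show ?thesis
    by blast
qed

end
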